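(* Let $G=(\mathcal{X},\mathcal{A},\mu,V)$ be a $k$-player free game with $\mu=\mu_1\otimes\cdots\otimes\mu_k$, and let $\gamma>0$. Suppose that for each $j\in[k]$, $\mathcal{X}'_j$ is a finite alphabet and $f_j:\mathcal{X}'_j\to\mathcal{X}_j$ is a map such that, for $U_j$ uniformly random on $\mathcal{X}'_j$, the distribution of $f_j(U_j)$ is within total variation distance $\gamma/k$ of $\mu_j$. Let $G'=(\mathcal{X}',\mathcal{A},U,V')$ where $\mathcal{X}'=\mathcal{X}'_1\times\cdots\times\mathcal{X}'_k$, $U$ is the uniform distribution on $\mathcal{X}'$, and $V'(x',a)=V\big((f_1(x'_1),\dots,f_k(x'_k)),a\big)$. Then $|\mathrm{val}^*(G')-\mathrm{val}^*(G)|\le\gamma$.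
   Context: A $k$-player game $G=(\mathcal{X},\mathcal{A},\mu,V)$ has finite product alphabets $\mathcal{X}=\prod_j\mathcal{X}_j$, $\mathcal{A}=\prod_j\mathcal{A}_j$, input distribution $\mu$ on $\mathcal{X}$ and predicate $V:\mathcal{X}\times\mathcal{A}\to\{0,1\}$; the referee samples $x\leftarrow\mu$, sends $x_j$ to player $j$, and accepts iff $V(x,a)=1$. It is free if $\mu$ is a product distribution. The entangled value $\mathrm{val}^*(G)$ is the supremum of the acceptance probability over strategies where the players share a finite-dimensional entangled state and each applies a POVM (depending on their own input) to their share to produce their answer. *)

theory Defs
  imports "HOL-Analysis.Analysis"
begin

text \<open>Players are indexed by j < k. Inputs/answers are tuples x :: nat => 'x restricted
  (extensionally) to {..<k}. A d x d complex matrix is a function nat => nat => complex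
  of which only the entries with indices < d matter.\<close>

definition psd_mat :: "nat \<Rightarrow> (nat \<Rightarrow> nat \<Rightarrow> complex) \<Rightarrow> bool" where
  "psd_mat d M \<longleftrightarrow>
     (\<forall>r<d. \<forall>c<d. M r c = cnj (M c r)) \<and>
     (\<forall>v :: nat \<Rightarrow> complex. 0 \<le> Re (\<Sum>r<d. \<Sum>c<d. cnj (v r) * M r c * v c))"

definition povm :: "nat \<Rightarrow> 'x set \<Rightarrow> 'a set \<Rightarrow> ('x \<Rightarrow> 'a \<Rightarrow> nat \<Rightarrow> nat \<Rightarrow> complex) \<Rightarrow> bool" where
  "povm d X A M \<longleftrightarrow>
     (\<forall>x\<in>X. (\<forall>a\<in>A. psd_mat d (M x a)) \<and>
        (\<forall>r<d. \<forall>c<d. (\<Sum>a\<in>A. M x a r c) = (if r = c then 1 else 0)))"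

text \<open>Basis index tuples of the tensor product of the spaces C^(d j), j < k.\<close>
definition idx :: "nat \<Rightarrow> (nat \<Rightarrow> nat) \<Rightarrow> (nat \<Rightarrow> nat) set" where
  "idx k d = PiE {..<k} (\<lambda>j. {..<d j})"

definition ent_strategy :: "nat \<Rightarrow> (nat \<Rightarrow> 'x set) \<Rightarrow> (nat \<Rightarrow> 'a set) \<Rightarrow> (nat \<Rightarrow> nat)
    \<Rightarrow> ((nat \<Rightarrow> nat) \<Rightarrow> complex) \<Rightarrow> (nat \<Rightarrow> 'x \<Rightarrow> 'a \<Rightarrow> nat \<Rightarrow> nat \<Rightarrow> complex) \<Rightarrow> bool" where
  "ent_strategy k X A d psi M \<longleftrightarrow>
     (\<forall>j<k. 1 \<le> d j \<and> povm (d j) (X j) (A j) (M j)) \<and>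
     (\<Sum>i\<in>idx k d. (cmod (psi i))\<^sup>2) = 1"

text \<open>p(a|x) = <psi| (M_1^{x_1 a_1} \<otimes> ... \<otimes> M_k^{x_k a_k}) |psi>, written out in coordinates.\<close>
definition ent_prob :: "nat \<Rightarrow> (nat \<Rightarrow> nat) \<Rightarrow> ((nat \<Rightarrow> nat) \<Rightarrow> complex)
    \<Rightarrow> (nat \<Rightarrow> 'x \<Rightarrow> 'a \<Rightarrow> nat \<Rightarrow> nat \<Rightarrow> complex) \<Rightarrow> (nat \<Rightarrow> 'x) \<Rightarrow> (nat \<Rightarrow> 'a) \<Rightarrow> real" where
  "ent_prob k d psi M x a =
     Re (\<Sum>i\<in>idx k d. \<Sum>i'\<in>idx k d.
           cnj (psi i) * (\<Prod>j<k. M j (x j) (a j) (i j) (i' j)) * psi i')"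

definition ent_win :: "nat \<Rightarrow> (nat \<Rightarrow> 'x set) \<Rightarrow> (nat \<Rightarrow> 'a set) \<Rightarrow> ((nat \<Rightarrow> 'x) \<Rightarrow> real)
    \<Rightarrow> ((nat \<Rightarrow> 'x) \<Rightarrow> (nat \<Rightarrow> 'a) \<Rightarrow> bool) \<Rightarrow> (nat \<Rightarrow> nat) \<Rightarrow> ((nat \<Rightarrow> nat) \<Rightarrow> complex)
    \<Rightarrow> (nat \<Rightarrow> 'x \<Rightarrow> 'a \<Rightarrow> nat \<Rightarrow> nat \<Rightarrow> complex) \<Rightarrow> real" where
  "ent_win k X A mu V d psi M =
     (\<Sum>x\<in>PiE {..<k} X. mu x * (\<Sum>a\<in>PiE {..<k} A. if V x a then ent_prob k d psi M x a else 0))"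

definition val_star :: "nat \<Rightarrow> (nat \<Rightarrow> 'x set) \<Rightarrow> (nat \<Rightarrow> 'a set) \<Rightarrow> ((nat \<Rightarrow> 'x) \<Rightarrow> real)
    \<Rightarrow> ((nat \<Rightarrow> 'x) \<Rightarrow> (nat \<Rightarrow> 'a) \<Rightarrow> bool) \<Rightarrow> real" where
  "val_star k X A mu V =
     Sup {ent_win k X A mu V d psi M | d psi M. ent_strategy k X A d psi M}"

definition tv_dist :: "'x set \<Rightarrow> ('x \<Rightarrow> real) \<Rightarrow> ('x \<Rightarrow> real) \<Rightarrow> real" where
  "tv_dist S p q = (1/2) * (\<Sum>x\<in>S. \<bar>p x - q x\<bar>)"

definition push_unif :: "'y set \<Rightarrow> ('y \<Rightarrow> 'x) \<Rightarrow> 'x \<Rightarrow> real" where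
  "push_unif Y f x = real (card {y\<in>Y. f y = x}) / real (card Y)"

end

theory Submission
  imports Defs
begin

text \<open>
  Let \<nu> be the law of (f_1(U_1), ..., f_k(U_k)), a product of the push-forwards of the uniform
  distributions. First, G' has exactly the entangled value of the game G_\<nu> obtained from G by
  replacing \<mu> with \<nu>: a strategy for G becomes one for G' by letting player j measure on f_j(x'_j),
  and a strategy for G' becomes one for G_\<nu> by letting player j average its POVMs over the fibre
  of f_j above its question; the winning probability is multilinear in the POVMs, so both
  translations preserve it. Second, for a fixed strategy the probability of winning on a given
  question lies in [0, 1], so changing the question distribution from \<nu> to \<mu> changes every winning
  probability, hence the value, by at most the total variation distance of \<nu> and \<mu>. A hybrid
  argument bounds this distance by the sum of the k marginal distances, each at most \<gamma>/k.
\<close>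

section \<open>Positive semidefinite matrices\<close>

definition sesq :: "nat \<Rightarrow> (nat \<Rightarrow> nat \<Rightarrow> complex) \<Rightarrow> (nat \<Rightarrow> complex) \<Rightarrow> (nat \<Rightarrow> complex)
    \<Rightarrow> complex" where
  "sesq d M v w = (\<Sum>r<d. \<Sum>c<d. cnj (v r) * M r c * w c)"

lemma psd_mat_iff_sesq:
  "psd_mat d M \<longleftrightarrow> (\<forall>r<d. \<forall>c<d. M r c = cnj (M c r)) \<and> (\<forall>v. 0 \<le> Re (sesq d M v v))"
  unfolding psd_mat_def sesq_def ..

lemma psd_mat_hermitian: "psd_mat d M \<Longrightarrow> r < d \<Longrightarrow> c < d \<Longrightarrow> M r c = cnj (M c r)"
  unfolding psd_mat_def by blast

lemma psd_mat_sesq_nonneg: "psd_mat d M \<Longrightarrow> 0 \<le> Re (sesq d M v v)"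
  unfolding psd_mat_iff_sesq by blast

lemma sesq_add:
  "sesq d M (\<lambda>r. v r + w r) (\<lambda>r. v r + w r) = sesq d M v v + sesq d M v w + sesq d M w v + sesq d M w w"
  unfolding sesq_def by (simp add: algebra_simps sum.distrib)

lemma sesq_unit_left:
  "m < d \<Longrightarrow> sesq d M (\<lambda>r. if r = m then a else 0) w = cnj a * (\<Sum>c<d. M m c * w c)"
proof -
  assume m: "m < d"
  have "sesq d M (\<lambda>r. if r = m then a else 0) w = (\<Sum>r<d. if r = m then cnj a * (\<Sum>c<d. M r c * w c) else 0)"
    unfolding sesq_def by (intro sum.cong refl) (simp add: sum_distrib_left mult.assoc)
  then show ?thesis using m by simp
qed

lemma sesq_unit_right:
  "m < d \<Longrightarrow> sesq d M v (\<lambda>c. if c = m then b else 0) = (\<Sum>r<d. cnj (v r) * M r m) * b"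
proof -
  assume m: "m < d"
  have "sesq d M v (\<lambda>c. if c = m then b else 0) = (\<Sum>r<d. cnj (v r) * M r m * b)"
    unfolding sesq_def using m by (intro sum.cong refl) (simp add: if_distrib cong: if_cong)
  then show ?thesis by (simp add: sum_distrib_right)
qed

lemma sesq_units:
  "m < d \<Longrightarrow> s < d \<Longrightarrow>
   sesq d M (\<lambda>r. if r = m then a else 0) (\<lambda>c. if c = s then b else 0) = cnj a * M m s * b"
  by (simp add: sesq_unit_left if_distrib cong: if_cong)

lemma psd_mat_diag:
  assumes "psd_mat d M" "m < d"
  shows "M m m = complex_of_real (Re (M m m))" "0 \<le> Re (M m m)"
proof -
  show "M m m = complex_of_real (Re (M m m))"
    using psd_mat_hermitian[OF assms(1,2,2)] by (metis Reals_cnj_iff of_real_Re)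
  show "0 \<le> Re (M m m)"
    using psd_mat_sesq_nonneg[OF assms(1), of "\<lambda>r. if r = m then 1 else 0"] sesq_units[OF assms(2,2)]
    by simp
qed

text \<open>Against the test vector t e_m + e_s the form is affine in t when M m m = 0, so it can
  only stay nonnegative if the coefficient M m s vanishes.\<close>
lemma psd_mat_zero_diag_row:
  assumes P: "psd_mat d M" and m: "m < d" and s: "s < d" and zero: "M m m = 0"
  shows "M m s = 0"
proof (rule ccontr)
  define z where "z = M m s"
  assume "M m s \<noteq> 0"
  then have z: "z \<noteq> 0" and "m \<noteq> s" using zero unfolding z_def by auto
  define R :: real where "R = (\<bar>Re (M s s)\<bar> + 1) / (2 * (cmod z)\<^sup>2)"
  define v where "v = (\<lambda>r. (if r = m then - complex_of_real R * z else 0) + (if r = s then 1 else 0))"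
  have "sesq d M v v = - complex_of_real (2 * R) * (z * cnj z) + M s s"
    unfolding v_def sesq_add using m s zero psd_mat_hermitian[OF P s m]
    by (simp add: sesq_units z_def algebra_simps)
  also have "\<dots> = complex_of_real (- 2 * R * (cmod z)\<^sup>2) + M s s"
    by (simp add: complex_norm_square[symmetric])
  finally have "Re (sesq d M v v) = - (\<bar>Re (M s s)\<bar> + 1) + Re (M s s)"
    unfolding R_def using z by simp
  then show False using psd_mat_sesq_nonneg[OF P, of v] by linarith
qed

lemma psd_mat_schur_complement:
  assumes P: "psd_mat d M" and m: "m < d" and pos: "0 < Re (M m m)"
  shows "psd_mat d (\<lambda>r s. M r s - M r m * M m s / M m m)"
proof -
  have real: "cnj (M m m) = M m m" using psd_mat_hermitian[OF P m m] by simp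
  have nz: "M m m \<noteq> 0" using pos by auto
  have "M r c - M r m * M m c / M m m = cnj (M c r - M c m * M m r / M m m)"
    if "r < d" "c < d" for r c
  proof -
    have "M r c = cnj (M c r)" "M r m = cnj (M m r)" "M m c = cnj (M c m)"
      using psd_mat_hermitian[OF P] m that by blast+
    then show ?thesis using real by (simp add: mult.commute)
  qed
  moreover have "0 \<le> Re (sesq d (\<lambda>r s. M r s - M r m * M m s / M m m) v v)" for v
  proof -
    define z where "z = (\<Sum>c<d. M m c * v c)"
    define \<alpha> where "\<alpha> = - z / M m m"
    have col: "(\<Sum>r<d. cnj (v r) * M r m) = cnj z"
    proof -
      have "(\<Sum>r<d. cnj (v r) * M r m) = (\<Sum>r<d. cnj (M m r * v r))"
        using psd_mat_hermitian[OF P _ m] by (intro sum.cong refl) simp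
      then show ?thesis unfolding z_def by simp
    qed
    have "sesq d (\<lambda>r s. M r s - M r m * M m s / M m m) v v
        = sesq d M v v - (\<Sum>r<d. \<Sum>c<d. (cnj (v r) * M r m) * (M m c * v c)) / M m m"
      unfolding sesq_def by (simp add: algebra_simps sum_subtractf sum_divide_distrib)
    also have "\<dots> = sesq d M v v - (\<Sum>r<d. cnj (v r) * M r m) * (\<Sum>c<d. M m c * v c) / M m m"
      by (simp only: sum_product)
    also have "\<dots> = sesq d M v v - cnj z * z / M m m"
      by (simp only: col flip: z_def)
    also have "\<dots> = sesq d M v v + cnj z * \<alpha> + cnj \<alpha> * z + cnj \<alpha> * M m m * \<alpha>"
      unfolding \<alpha>_def using nz real by (simp add: field_simps)
    also have "\<dots> = sesq d M (\<lambda>r. v r + (if r = m then \<alpha> else 0)) (\<lambda>r. v r + (if r = m then \<alpha> else 0))"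
      unfolding sesq_add sesq_units[OF m m] using m
      by (simp add: sesq_unit_left sesq_unit_right col flip: z_def)
    finally show ?thesis using psd_mat_sesq_nonneg[OF P] by simp
  qed
  ultimately show ?thesis unfolding psd_mat_iff_sesq by blast
qed

lemma psd_mat_pivot_split:
  assumes P: "psd_mat d M" and m: "m < d"
    and zero: "\<forall>r<d. \<forall>s<d. (r < m \<or> s < m) \<longrightarrow> M r s = 0"
  obtains v M' where "psd_mat d M'"
    and "\<forall>r<d. \<forall>s<d. (r < Suc m \<or> s < Suc m) \<longrightarrow> M' r s = 0"
    and "\<forall>r<d. \<forall>s<d. M r s = M' r s + v r * cnj (v s)"
proof (cases "M m m = 0")
  case True
  have row: "M m s = 0" if "s < d" for s using psd_mat_zero_diag_row[OF P m that True] .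
  have col: "M s m = 0" if "s < d" for s using psd_mat_hermitian[OF P that m] row[OF that] by simp
  show ?thesis
  proof
    show "\<forall>r<d. \<forall>s<d. (r < Suc m \<or> s < Suc m) \<longrightarrow> M r s = 0"
      using zero row col less_Suc_eq by auto
  qed (use P in auto)
next
  case False
  define p where "p = Re (M m m)"
  have Mmm: "M m m = complex_of_real p" using psd_mat_diag(1)[OF P m] unfolding p_def .
  have "p \<noteq> 0" using False Mmm by auto
  then have p: "0 < p" using psd_mat_diag(2)[OF P m] unfolding p_def by linarith
  show ?thesis
  proof
    show "psd_mat d (\<lambda>r s. M r s - M r m * M m s / M m m)"
      using psd_mat_schur_complement[OF P m] p unfolding p_def .
    show "\<forall>r<d. \<forall>s<d. (r < Suc m \<or> s < Suc m) \<longrightarrow> M r s - M r m * M m s / M m m = 0"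
      using zero m False by (auto simp: less_Suc_eq)
    have "complex_of_real (sqrt p) * complex_of_real (sqrt p) = M m m"
      using p Mmm by (simp flip: of_real_mult)
    then show "\<forall>r<d. \<forall>s<d. M r s = (M r s - M r m * M m s / M m m)
        + M r m / complex_of_real (sqrt p) * cnj (M s m / complex_of_real (sqrt p))"
      using psd_mat_hermitian[OF P m] by simp
  qed
qed

lemma psd_mat_gram_from:
  "psd_mat d M \<Longrightarrow> \<forall>r<d. \<forall>s<d. (r < m \<or> s < m) \<longrightarrow> M r s = 0 \<Longrightarrow>
   \<exists>c. \<forall>r<d. \<forall>s<d. M r s = (\<Sum>l\<in>{m..<d}. c l r * cnj (c l s))"
proof (induction "d - m" arbitrary: m M)
  case 0
  then show ?case by auto
next
  case (Suc n)
  then have m: "m < d" by simp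
  obtain v M' where P': "psd_mat d M'"
    and zero': "\<forall>r<d. \<forall>s<d. (r < Suc m \<or> s < Suc m) \<longrightarrow> M' r s = 0"
    and split: "\<forall>r<d. \<forall>s<d. M r s = M' r s + v r * cnj (v s)"
    using psd_mat_pivot_split[OF Suc.prems(1) m Suc.prems(2)] .
  obtain c where c: "\<forall>r<d. \<forall>s<d. M' r s = (\<Sum>l\<in>{Suc m..<d}. c l r * cnj (c l s))"
  proof -
    have "n = d - Suc m" using Suc.hyps(2) by simp
    then show ?thesis using Suc.hyps(1) P' zero' that by blast
  qed
  have "\<forall>r<d. \<forall>s<d. M r s = (\<Sum>l\<in>{m..<d}. (c(m := v)) l r * cnj ((c(m := v)) l s))"
    using split c m by (simp add: sum.atLeast_Suc_lessThan add.commute)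
  then show ?case by blast
qed

lemma psd_mat_gram:
  "psd_mat d M \<Longrightarrow> \<exists>c. \<forall>r<d. \<forall>s<d. M r s = (\<Sum>l<d. c l r * cnj (c l s))"
  using psd_mat_gram_from[of d M 0] by (simp add: atLeast0LessThan)

lemma psd_mat_average:
  assumes "finite S" "S \<noteq> {}" "\<forall>y\<in>S. psd_mat d (N y)"
  shows "psd_mat d (\<lambda>r c. (\<Sum>y\<in>S. N y r c) / of_nat (card S))"
  unfolding psd_mat_iff_sesq
proof (intro conjI allI impI)
  fix r c assume "r < d" "c < d"
  then have "(\<Sum>y\<in>S. N y r c) = (\<Sum>y\<in>S. cnj (N y c r))"
    using assms(3) psd_mat_hermitian by (intro sum.cong) blast+
  then show "(\<Sum>y\<in>S. N y r c) / of_nat (card S) = cnj ((\<Sum>y\<in>S. N y c r) / of_nat (card S))"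
    by simp
next
  fix v
  have "sesq d (\<lambda>r c. (\<Sum>y\<in>S. N y r c) / of_nat (card S)) v v = (\<Sum>y\<in>S. sesq d (N y) v v) / of_nat (card S)"
    unfolding sesq_def
    by (simp add: sum_divide_distrib sum_distrib_left sum_distrib_right sum.swap[of _ S] mult.assoc)
  moreover have "0 \<le> Re (\<Sum>y\<in>S. sesq d (N y) v v)"
    unfolding Re_sum using assms(3) psd_mat_sesq_nonneg by (intro sum_nonneg) blast
  ultimately show "0 \<le> Re (sesq d (\<lambda>r c. (\<Sum>y\<in>S. N y r c) / of_nat (card S)) v v)"
    by simp
qed

section \<open>Distributions and total variation\<close>

definition distr_on :: "'b set \<Rightarrow> ('b \<Rightarrow> real) \<Rightarrow> bool" where
  "distr_on S p \<longleftrightarrow> (\<forall>x\<in>S. 0 \<le> p x) \<and> (\<Sum>x\<in>S. p x) = 1"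

lemma distr_on_prod:
  fixes X :: "nat \<Rightarrow> 'b set"
  assumes "\<forall>j<k. finite (X j) \<and> distr_on (X j) (p j)"
  shows "distr_on (PiE {..<k} X) (\<lambda>x. \<Prod>j<k. p j (x j))"
proof -
  have "(\<Sum>x\<in>PiE {..<k} X. \<Prod>j<k. p j (x j)) = (\<Prod>j<k. \<Sum>y\<in>X j. p j y)"
    using assms by (subst prod_sum_PiE) auto
  then show ?thesis
    using assms unfolding distr_on_def by (auto simp: PiE_iff intro!: prod_nonneg)
qed

lemma distr_on_push_unif:
  assumes "finite Y" "Y \<noteq> {}" "finite X" "f ` Y \<subseteq> X"
  shows "distr_on X (push_unif Y f)"
  unfolding distr_on_def
proof
  show "\<forall>x\<in>X. 0 \<le> push_unif Y f x" unfolding push_unif_def by simp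
  have "(\<Sum>x\<in>X. real (card {y \<in> Y. f y = x})) = (\<Sum>x\<in>X. \<Sum>y\<in>{y \<in> Y. f y = x}. 1)"
    by simp
  also have "\<dots> = real (card Y)"
    using sum.group[OF assms(1,3,4), of "\<lambda>_. 1::real"] by simp
  finally show "(\<Sum>x\<in>X. push_unif Y f x) = 1"
    unfolding push_unif_def using assms(1,2) by (simp flip: sum_divide_distrib)
qed

lemma abs_prod_diff_le_hybrid_sum:
  fixes p q :: "nat \<Rightarrow> real"
  assumes "\<forall>j<k. 0 \<le> p j \<and> 0 \<le> q j"
  shows "\<bar>(\<Prod>j<k. p j) - (\<Prod>j<k. q j)\<bar>
    \<le> (\<Sum>j<k. \<Prod>i<k. if i < j then q i else if i = j then \<bar>p i - q i\<bar> else p i)"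
  using assms
proof (induction k)
  case 0
  then show ?case by simp
next
  case (Suc k)
  define h where "h j i = (if i < j then q i else if i = j then \<bar>p i - q i\<bar> else p i)" for j i
  have "\<bar>(\<Prod>j<Suc k. p j) - (\<Prod>j<Suc k. q j)\<bar>
      = \<bar>((\<Prod>j<k. p j) - (\<Prod>j<k. q j)) * p k + (\<Prod>j<k. q j) * (p k - q k)\<bar>"
    by (simp add: algebra_simps)
  also have "\<dots> \<le> \<bar>(\<Prod>j<k. p j) - (\<Prod>j<k. q j)\<bar> * p k + (\<Prod>j<k. q j) * \<bar>p k - q k\<bar>"
    using Suc.prems prod_nonneg[of "{..<k}" q]
    by (intro abs_triangle_ineq[THEN order_trans]) (simp add: abs_mult)
  also have "\<dots> \<le> (\<Sum>j<k. \<Prod>i<k. h j i) * p k + (\<Prod>i<k. h k i) * h k k"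
    using Suc by (intro add_mono mult_right_mono) (auto simp: h_def intro!: prod.cong)
  also have "\<dots> = (\<Sum>j<Suc k. \<Prod>i<Suc k. h j i)"
    by (simp add: sum_distrib_right h_def)
  finally show ?case unfolding h_def .
qed

lemma tv_dist_prod_le_sum:
  fixes p q :: "nat \<Rightarrow> 'b \<Rightarrow> real"
  assumes fin: "\<forall>j<k. finite (X j)"
    and distr: "\<forall>j<k. distr_on (X j) (p j) \<and> distr_on (X j) (q j)"
  shows "tv_dist (PiE {..<k} X) (\<lambda>x. \<Prod>j<k. p j (x j)) (\<lambda>x. \<Prod>j<k. q j (x j))
    \<le> (\<Sum>j<k. tv_dist (X j) (p j) (q j))"
proof -
  define h where "h j i y = (if i < j then q i y else if i = j then \<bar>p i y - q i y\<bar> else p i y)" for j i y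
  have marginal: "(\<Sum>x\<in>PiE {..<k} X. \<Prod>i<k. h j i (x i)) = (\<Sum>y\<in>X j. \<bar>p j y - q j y\<bar>)"
    if j: "j < k" for j
  proof -
    have "(\<Sum>x\<in>PiE {..<k} X. \<Prod>i<k. h j i (x i)) = (\<Prod>i<k. \<Sum>y\<in>X i. h j i y)"
      using fin by (subst prod_sum_PiE[symmetric]) auto
    also have "\<dots> = (\<Sum>y\<in>X j. h j j y) * (\<Prod>i\<in>{..<k} - {j}. \<Sum>y\<in>X i. h j i y)"
      using j by (intro prod.remove) auto
    also have "(\<Prod>i\<in>{..<k} - {j}. \<Sum>y\<in>X i. h j i y) = 1"
    proof (intro prod.neutral ballI)
      fix i assume "i \<in> {..<k} - {j}"
      then have "h j i = (if i < j then q i else p i)" by (auto simp: h_def)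
      then show "(\<Sum>y\<in>X i. h j i y) = 1"
        using distr \<open>i \<in> {..<k} - {j}\<close> unfolding distr_on_def by simp
    qed
    finally show ?thesis by (simp add: h_def)
  qed
  have "(\<Sum>x\<in>PiE {..<k} X. \<bar>(\<Prod>j<k. p j (x j)) - (\<Prod>j<k. q j (x j))\<bar>)
      \<le> (\<Sum>x\<in>PiE {..<k} X. \<Sum>j<k. \<Prod>i<k. h j i (x i))"
    using distr abs_prod_diff_le_hybrid_sum[of k "\<lambda>j. p j (_ j)" "\<lambda>j. q j (_ j)"]
    unfolding distr_on_def by (intro sum_mono) (auto simp: h_def PiE_iff)
  also have "\<dots> = (\<Sum>j<k. \<Sum>y\<in>X j. \<bar>p j y - q j y\<bar>)"
    by (subst sum.swap) (simp add: marginal)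
  finally have "(\<Sum>x\<in>PiE {..<k} X. \<bar>(\<Prod>j<k. p j (x j)) - (\<Prod>j<k. q j (x j))\<bar>)
      \<le> (\<Sum>j<k. \<Sum>y\<in>X j. \<bar>p j y - q j y\<bar>)" .
  moreover have "(\<Sum>j<k. tv_dist (X j) (p j) (q j)) = 1/2 * (\<Sum>j<k. \<Sum>y\<in>X j. \<bar>p j y - q j y\<bar>)"
    unfolding tv_dist_def by (rule sum_distrib_left[symmetric])
  ultimately show ?thesis unfolding tv_dist_def by linarith
qed

lemma abs_sum_diff_le_tv_dist:
  fixes nu mu W :: "'b \<Rightarrow> real"
  assumes W: "\<forall>x\<in>S. 0 \<le> W x \<and> W x \<le> 1" and mass: "(\<Sum>x\<in>S. nu x) = (\<Sum>x\<in>S. mu x)"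
  shows "\<bar>(\<Sum>x\<in>S. nu x * W x) - (\<Sum>x\<in>S. mu x * W x)\<bar> \<le> tv_dist S nu mu"
proof -
  have "(\<Sum>x\<in>S. (nu x - mu x) * (1/2)) = 0"
    using mass by (simp add: sum_subtractf flip: sum_divide_distrib)
  then have "(\<Sum>x\<in>S. nu x * W x) - (\<Sum>x\<in>S. mu x * W x)
      = (\<Sum>x\<in>S. (nu x - mu x) * W x) - (\<Sum>x\<in>S. (nu x - mu x) * (1/2))"
    by (simp add: sum_subtractf left_diff_distrib)
  also have "\<dots> = (\<Sum>x\<in>S. (nu x - mu x) * (W x - 1/2))"
    by (simp add: sum_subtractf right_diff_distrib)
  also have "\<bar>\<dots>\<bar> \<le> (\<Sum>x\<in>S. \<bar>nu x - mu x\<bar> * (1/2))"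
  proof (intro sum_abs[THEN order_trans] sum_mono)
    fix x assume "x \<in> S"
    then have "0 \<le> W x" "W x \<le> 1" using W by auto
    then have "\<bar>W x - 1/2\<bar> \<le> 1/2" by arith
    then show "\<bar>(nu x - mu x) * (W x - 1/2)\<bar> \<le> \<bar>nu x - mu x\<bar> * (1/2)"
      unfolding abs_mult by (rule mult_left_mono) simp
  qed
  finally show ?thesis
    unfolding tv_dist_def by (simp add: sum_distrib_left mult.commute)
qed

section \<open>Entangled strategies\<close>

lemma finite_idx: "finite (idx k d)"
  unfolding idx_def by (simp add: finite_PiE)

text \<open>Writing each factor as a Gram matrix turns the tensor-product form into a sum of squared
  moduli.\<close>
lemma ent_prob_nonneg_if_psd:
  assumes psd: "\<forall>j<k. psd_mat (d j) (M j (x j) (a j))"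
  shows "0 \<le> ent_prob k d psi M x a"
proof -
  have "\<forall>j\<in>{..<k}. \<exists>c. \<forall>r<d j. \<forall>s<d j. M j (x j) (a j) r s = (\<Sum>l<d j. c l r * cnj (c l s))"
    using psd psd_mat_gram by blast
  then obtain c where c: "\<forall>j\<in>{..<k}. \<forall>r<d j. \<forall>s<d j.
      M j (x j) (a j) r s = (\<Sum>l<d j. c j l r * cnj (c j l s))"
    by (rule bchoice[THEN exE])
  define g where "g l i = (\<Prod>j<k. c j (l j) (i j))" for l i :: "nat \<Rightarrow> nat"
  define \<phi> where "\<phi> l = (\<Sum>i\<in>idx k d. cnj (g l i) * psi i)" for l
  have gram: "(\<Prod>j<k. M j (x j) (a j) (i j) (i' j)) = (\<Sum>l\<in>idx k d. g l i * cnj (g l i'))"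
    if "i \<in> idx k d" "i' \<in> idx k d" for i i'
  proof -
    have "(\<Prod>j<k. M j (x j) (a j) (i j) (i' j)) = (\<Prod>j<k. \<Sum>l<d j. c j l (i j) * cnj (c j l (i' j)))"
      using that c unfolding idx_def by (intro prod.cong refl) (auto simp: PiE_iff)
    also have "\<dots> = (\<Sum>l\<in>idx k d. \<Prod>j<k. c j (l j) (i j) * cnj (c j (l j) (i' j)))"
      unfolding idx_def by (subst prod_sum_PiE) auto
    finally show ?thesis unfolding g_def by (simp add: prod.distrib)
  qed
  have "(\<Sum>i\<in>idx k d. \<Sum>i'\<in>idx k d. cnj (psi i) * (\<Prod>j<k. M j (x j) (a j) (i j) (i' j)) * psi i')
      = (\<Sum>i\<in>idx k d. \<Sum>i'\<in>idx k d. \<Sum>l\<in>idx k d. (g l i * cnj (psi i)) * (cnj (g l i') * psi i'))"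
    by (intro sum.cong refl) (simp add: gram sum_distrib_left sum_distrib_right mult_ac)
  also have "\<dots> = (\<Sum>i\<in>idx k d. \<Sum>l\<in>idx k d. \<Sum>i'\<in>idx k d. (g l i * cnj (psi i)) * (cnj (g l i') * psi i'))"
    by (rule sum.cong[OF refl], rule sum.swap)
  also have "\<dots> = (\<Sum>l\<in>idx k d. \<Sum>i\<in>idx k d. \<Sum>i'\<in>idx k d. (g l i * cnj (psi i)) * (cnj (g l i') * psi i'))"
    by (rule sum.swap)
  also have "\<dots> = (\<Sum>l\<in>idx k d. cnj (\<phi> l) * \<phi> l)"
    unfolding \<phi>_def by (simp add: sum_product)
  also have "\<dots> = (\<Sum>l\<in>idx k d. complex_of_real ((cmod (\<phi> l))\<^sup>2))"
    by (simp add: complex_norm_square mult.commute del: of_real_power)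
  finally show ?thesis
    unfolding ent_prob_def by (simp add: sum_nonneg)
qed

lemma ent_prob_sum_answers:
  assumes finA: "\<forall>j<k. finite (A j)"
    and complete: "\<forall>j<k. \<forall>r<d j. \<forall>c<d j. (\<Sum>b\<in>A j. M j (x j) b r c) = (if r = c then 1 else 0)"
  shows "(\<Sum>a\<in>PiE {..<k} A. ent_prob k d psi M x a) = (\<Sum>i\<in>idx k d. (cmod (psi i))\<^sup>2)"
proof -
  have delta: "(\<Sum>a\<in>PiE {..<k} A. \<Prod>j<k. M j (x j) (a j) (i j) (i' j)) = (if i = i' then 1 else 0)"
    if i: "i \<in> idx k d" and i': "i' \<in> idx k d" for i i'
  proof -
    have "(\<Sum>a\<in>PiE {..<k} A. \<Prod>j<k. M j (x j) (a j) (i j) (i' j))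
        = (\<Prod>j<k. if i j = i' j then 1 else 0)"
      using finA complete i i' unfolding idx_def
      by (subst prod_sum_PiE[symmetric]) (auto simp: PiE_iff intro!: prod.cong)
    also have "\<dots> = (if i = i' then 1 else 0)"
    proof (cases "i = i'")
      case False
      then obtain j where "j < k" "i j \<noteq> i' j"
        using i i' unfolding idx_def by (metis PiE_ext lessThan_iff)
      then show ?thesis using False by (intro trans[OF prod_zero]) auto
    qed simp
    finally show ?thesis .
  qed
  have "(\<Sum>a\<in>PiE {..<k} A. \<Sum>i\<in>idx k d. \<Sum>i'\<in>idx k d.
          cnj (psi i) * (\<Prod>j<k. M j (x j) (a j) (i j) (i' j)) * psi i')
      = (\<Sum>i\<in>idx k d. \<Sum>i'\<in>idx k d.
          cnj (psi i) * (\<Sum>a\<in>PiE {..<k} A. \<Prod>j<k. M j (x j) (a j) (i j) (i' j)) * psi i')"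
    by (simp add: sum.swap[of _ "PiE {..<k} A"] sum_distrib_left sum_distrib_right)
  also have "\<dots> = (\<Sum>i\<in>idx k d. \<Sum>i'\<in>idx k d. if i = i' then cnj (psi i) * psi i' else 0)"
    by (intro sum.cong refl) (simp add: delta)
  also have "\<dots> = (\<Sum>i\<in>idx k d. cnj (psi i) * psi i)"
    by (simp add: finite_idx)
  also have "\<dots> = (\<Sum>i\<in>idx k d. complex_of_real ((cmod (psi i))\<^sup>2))"
    by (simp add: complex_norm_square mult.commute del: of_real_power)
  finally show ?thesis
    unfolding ent_prob_def by (metis Re_complex_of_real Re_sum of_real_sum)
qed

definition ent_win_at :: "nat \<Rightarrow> (nat \<Rightarrow> 'a set) \<Rightarrow> ((nat \<Rightarrow> 'x) \<Rightarrow> (nat \<Rightarrow> 'a) \<Rightarrow> bool)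
    \<Rightarrow> (nat \<Rightarrow> nat) \<Rightarrow> ((nat \<Rightarrow> nat) \<Rightarrow> complex) \<Rightarrow> (nat \<Rightarrow> 'x \<Rightarrow> 'a \<Rightarrow> nat \<Rightarrow> nat \<Rightarrow> complex)
    \<Rightarrow> (nat \<Rightarrow> 'x) \<Rightarrow> real" where
  "ent_win_at k A V d psi M x = (\<Sum>a\<in>PiE {..<k} A. if V x a then ent_prob k d psi M x a else 0)"

lemma ent_win_eq_sum_ent_win_at:
  "ent_win k X A mu V d psi M = (\<Sum>x\<in>PiE {..<k} X. mu x * ent_win_at k A V d psi M x)"
  unfolding ent_win_def ent_win_at_def ..

lemma ent_prob_nonneg:
  assumes "ent_strategy k X A d psi M" "x \<in> PiE {..<k} X" "a \<in> PiE {..<k} A"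
  shows "0 \<le> ent_prob k d psi M x a"
  using assms unfolding ent_strategy_def povm_def
  by (intro ent_prob_nonneg_if_psd) (auto simp: PiE_iff)

lemma ent_prob_sum_eq_1:
  assumes S: "ent_strategy k X A d psi M" and x: "x \<in> PiE {..<k} X" and finA: "\<forall>j<k. finite (A j)"
  shows "(\<Sum>a\<in>PiE {..<k} A. ent_prob k d psi M x a) = 1"
proof -
  have "\<forall>j<k. \<forall>r<d j. \<forall>c<d j. (\<Sum>b\<in>A j. M j (x j) b r c) = (if r = c then 1 else 0)"
    using S x unfolding ent_strategy_def povm_def by (auto simp: PiE_iff)
  then have "(\<Sum>a\<in>PiE {..<k} A. ent_prob k d psi M x a) = (\<Sum>i\<in>idx k d. (cmod (psi i))\<^sup>2)"
    by (rule ent_prob_sum_answers[OF finA])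
  then show ?thesis using S unfolding ent_strategy_def by simp
qed

lemma ent_win_at_bounds:
  assumes S: "ent_strategy k X A d psi M" and x: "x \<in> PiE {..<k} X" and finA: "\<forall>j<k. finite (A j)"
  shows "0 \<le> ent_win_at k A V d psi M x" "ent_win_at k A V d psi M x \<le> 1"
proof -
  have nonneg: "0 \<le> ent_prob k d psi M x a" if "a \<in> PiE {..<k} A" for a
    using ent_prob_nonneg[OF S x that] .
  show "0 \<le> ent_win_at k A V d psi M x"
    unfolding ent_win_at_def by (intro sum_nonneg) (simp add: nonneg)
  have "ent_win_at k A V d psi M x \<le> (\<Sum>a\<in>PiE {..<k} A. ent_prob k d psi M x a)"
    unfolding ent_win_at_def by (intro sum_mono) (simp add: nonneg)
  then show "ent_win_at k A V d psi M x \<le> 1"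
    using ent_prob_sum_eq_1[OF S x finA] by simp
qed

lemma ent_win_le_1:
  assumes S: "ent_strategy k X A d psi M" and finA: "\<forall>j<k. finite (A j)"
    and mu: "distr_on (PiE {..<k} X) mu"
  shows "ent_win k X A mu V d psi M \<le> 1"
proof -
  have "ent_win k X A mu V d psi M \<le> (\<Sum>x\<in>PiE {..<k} X. mu x * 1)"
    unfolding ent_win_eq_sum_ent_win_at using ent_win_at_bounds[OF S _ finA] mu
    unfolding distr_on_def by (intro sum_mono mult_left_mono) auto
  then show ?thesis using mu unfolding distr_on_def by simp
qed

lemma ent_strategy_exists:
  fixes X :: "nat \<Rightarrow> 'x set" and A :: "nat \<Rightarrow> 'a set"
  assumes "\<forall>j<k. finite (A j) \<and> A j \<noteq> {}"
  shows "\<exists>d psi M. ent_strategy k X A d psi M"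
proof -
  define a0 where "a0 j = (SOME a. a \<in> A j)" for j
  have a0: "\<forall>j<k. a0 j \<in> A j" using assms unfolding a0_def by (simp add: some_in_eq)
  define M :: "nat \<Rightarrow> 'x \<Rightarrow> 'a \<Rightarrow> nat \<Rightarrow> nat \<Rightarrow> complex"
    where "M j x a r c = (if a = a0 j then 1 else 0)" for j x a r c
  have "idx k (\<lambda>_. 1) = {\<lambda>j\<in>{..<k}. 0}"
  proof -
    have "{..<1::nat} = {0}" by auto
    then show ?thesis unfolding idx_def by (simp add: PiE_singleton)
  qed
  moreover have "psd_mat 1 (M j x a)" for j x a
    unfolding psd_mat_def M_def by (simp add: complex_norm_square mult.commute del: of_real_power)
  then have "povm 1 (X j) (A j) (M j)" if "j < k" for j
    unfolding povm_def M_def using a0 assms that by simp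
  ultimately have "ent_strategy k X A (\<lambda>_. 1) (\<lambda>_. 1) M"
    unfolding ent_strategy_def by simp
  then show ?thesis by blast
qed

section \<open>Relabelling the questions\<close>

definition map_tuple :: "nat \<Rightarrow> (nat \<Rightarrow> 'y \<Rightarrow> 'x) \<Rightarrow> (nat \<Rightarrow> 'y) \<Rightarrow> nat \<Rightarrow> 'x" where
  "map_tuple k f y = (\<lambda>j\<in>{..<k}. f j (y j))"

lemma map_tuple_in_PiE:
  "\<forall>j<k. f j ` X' j \<subseteq> X j \<Longrightarrow> y \<in> PiE {..<k} X' \<Longrightarrow> map_tuple k f y \<in> PiE {..<k} X"
  unfolding map_tuple_def by (auto simp: PiE_iff image_subset_iff)

lemma map_tuple_fiber:
  assumes "x \<in> PiE {..<k} X"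
  shows "{y \<in> PiE {..<k} X'. map_tuple k f y = x} = PiE {..<k} (\<lambda>j. {y \<in> X' j. f j y = x j})"
proof (intro set_eqI iffI)
  fix y assume "y \<in> {y \<in> PiE {..<k} X'. map_tuple k f y = x}"
  then show "y \<in> PiE {..<k} (\<lambda>j. {y \<in> X' j. f j y = x j})"
    unfolding map_tuple_def by (auto simp: PiE_iff)
next
  fix y assume y: "y \<in> PiE {..<k} (\<lambda>j. {y \<in> X' j. f j y = x j})"
  have "map_tuple k f y = x"
    using y assms unfolding map_tuple_def by (intro extensionalityI[of _ "{..<k}"]) (auto simp: PiE_iff)
  then show "y \<in> {y \<in> PiE {..<k} X'. map_tuple k f y = x}"
    using y by (auto simp: PiE_iff)
qed

lemma sum_uniform_by_fibers:
  fixes g :: "(nat \<Rightarrow> 'y) \<Rightarrow> real" and h :: "(nat \<Rightarrow> 'x) \<Rightarrow> real"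
  assumes finX: "\<forall>j<k. finite (X j)" and finX': "\<forall>j<k. finite (X' j)"
    and maps: "\<forall>j<k. f j ` X' j \<subseteq> X j"
    and fibers: "\<forall>x\<in>PiE {..<k} X. (\<Sum>y\<in>{y \<in> PiE {..<k} X'. map_tuple k f y = x}. g y)
      = real (card {y \<in> PiE {..<k} X'. map_tuple k f y = x}) * h x"
  shows "(\<Sum>y\<in>PiE {..<k} X'. 1 / real (card (PiE {..<k} X')) * g y)
    = (\<Sum>x\<in>PiE {..<k} X. (\<Prod>j<k. push_unif (X' j) (f j) (x j)) * h x)"
proof -
  define N where "N = real (card (PiE {..<k} X'))"
  have push: "(\<Prod>j<k. push_unif (X' j) (f j) (x j))
      = real (card {y \<in> PiE {..<k} X'. map_tuple k f y = x}) / N" if "x \<in> PiE {..<k} X" for x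
    unfolding push_unif_def N_def map_tuple_fiber[OF that] by (simp add: card_PiE prod_dividef)
  have "(\<Sum>y\<in>PiE {..<k} X'. g y)
      = (\<Sum>x\<in>PiE {..<k} X. \<Sum>y\<in>{y \<in> PiE {..<k} X'. map_tuple k f y = x}. g y)"
    using finX finX' map_tuple_in_PiE[OF maps]
    by (intro sum.group[symmetric]) (auto intro!: finite_PiE)
  then show ?thesis
    using fibers push by (simp add: N_def flip: sum_divide_distrib)
qed

lemma ent_strategy_pullback:
  assumes "ent_strategy k X A d psi M" "\<forall>j<k. f j ` X' j \<subseteq> X j"
  shows "ent_strategy k X' A d psi (\<lambda>j y. M j (f j y))"
  using assms unfolding ent_strategy_def povm_def by blast

lemma ent_win_at_pullback:
  "ent_win_at k A (\<lambda>y a. V (map_tuple k f y) a) d psi (\<lambda>j y. M j (f j y)) y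
    = ent_win_at k A V d psi M (map_tuple k f y)"
proof -
  have eq: "ent_prob k d psi (\<lambda>j y. M j (f j y)) y = ent_prob k d psi M (map_tuple k f y)"
    unfolding fun_eq_iff ent_prob_def map_tuple_def
    by (intro allI arg_cong[where f = Re] sum.cong prod.cong refl) auto
  show ?thesis unfolding ent_win_at_def eq ..
qed

text \<open>Questions with empty fibre have weight zero under the push-forward distribution, so any
  measurement of the strategy may be used there.\<close>
definition fiber_avg :: "'y set \<Rightarrow> ('y \<Rightarrow> 'x) \<Rightarrow> ('y \<Rightarrow> 'a \<Rightarrow> nat \<Rightarrow> nat \<Rightarrow> complex)
    \<Rightarrow> 'x \<Rightarrow> 'a \<Rightarrow> nat \<Rightarrow> nat \<Rightarrow> complex" where
  "fiber_avg Y g N x a r c =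
     (if {y \<in> Y. g y = x} = {} then N (SOME y. y \<in> Y) a r c
      else (\<Sum>y\<in>{y \<in> Y. g y = x}. N y a r c) / of_nat (card {y \<in> Y. g y = x}))"

lemma povm_fiber_avg:
  assumes finY: "finite Y" and "Y \<noteq> {}" and N: "povm d Y A N"
  shows "povm d X A (fiber_avg Y g N)"
  unfolding povm_def
proof (intro ballI conjI)
  fix x
  define C where "C = {y \<in> Y. g y = x}"
  have C: "finite C" "C \<subseteq> Y" using finY unfolding C_def by auto
  have "(\<forall>a\<in>A. psd_mat d (fiber_avg Y g N x a)) \<and>
      (\<forall>r<d. \<forall>c<d. (\<Sum>a\<in>A. fiber_avg Y g N x a r c) = (if r = c then 1 else 0))"
  proof (cases "C = {}")
    case True
    then have "fiber_avg Y g N x = N (SOME y. y \<in> Y)"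
      unfolding fiber_avg_def C_def[symmetric] by (intro ext) simp
    moreover have "(SOME y. y \<in> Y) \<in> Y" using \<open>Y \<noteq> {}\<close> by (simp add: some_in_eq)
    ultimately show ?thesis using N unfolding povm_def by simp
  next
    case False
    then have avg: "fiber_avg Y g N x a = (\<lambda>r c. (\<Sum>y\<in>C. N y a r c) / of_nat (card C))" for a
      using False unfolding fiber_avg_def C_def[symmetric] by (intro ext) simp
    have "psd_mat d (fiber_avg Y g N x a)" if "a \<in> A" for a
      unfolding avg using C False N that unfolding povm_def by (intro psd_mat_average) auto
    moreover have "(\<Sum>a\<in>A. fiber_avg Y g N x a r c) = (if r = c then 1 else 0)"
      if "r < d" "c < d" for r c
    proof -
      have "(\<Sum>a\<in>A. fiber_avg Y g N x a r c) = (\<Sum>y\<in>C. \<Sum>a\<in>A. N y a r c) / of_nat (card C)"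
        unfolding avg by (simp add: sum.swap[of _ A] flip: sum_divide_distrib)
      also have "\<dots> = (\<Sum>y\<in>C. if r = c then 1 else 0) / of_nat (card C)"
        using N C that unfolding povm_def by (intro arg_cong2[where f = "(/)"] sum.cong) auto
      finally show ?thesis using C False by simp
    qed
    ultimately show ?thesis by blast
  qed
  then show "\<And>a. a \<in> A \<Longrightarrow> psd_mat d (fiber_avg Y g N x a)"
    and "\<forall>r<d. \<forall>c<d. (\<Sum>a\<in>A. fiber_avg Y g N x a r c) = (if r = c then 1 else 0)"
    by blast+
qed

lemma ent_strategy_fiber_avg:
  assumes "ent_strategy k X' A d psi M" "\<forall>j<k. finite (X' j) \<and> X' j \<noteq> {}"
  shows "ent_strategy k X A d psi (\<lambda>j. fiber_avg (X' j) (f j) (M j))"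
  using assms povm_fiber_avg unfolding ent_strategy_def by blast

lemma ent_prob_average:
  fixes N :: "nat \<Rightarrow> 'y \<Rightarrow> 'a \<Rightarrow> nat \<Rightarrow> nat \<Rightarrow> complex"
  assumes C: "\<forall>j<k. finite (C j) \<and> C j \<noteq> {}"
    and avg: "\<forall>j<k. \<forall>r c. M j (x j) (a j) r c = (\<Sum>y\<in>C j. N j y (a j) r c) / of_nat (card (C j))"
  shows "(\<Sum>y\<in>PiE {..<k} C. ent_prob k d psi N y a) = real (card (PiE {..<k} C)) * ent_prob k d psi M x a"
proof -
  define K where "K = card (PiE {..<k} C)"
  have "K \<noteq> 0" unfolding K_def using C by (simp add: card_PiE)
  define P where "P y i i' = (\<Prod>j<k. N j (y j) (a j) (i j) (i' j))" for y and i i' :: "nat \<Rightarrow> nat"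
  have prod: "(\<Prod>j<k. M j (x j) (a j) (i j) (i' j)) = (\<Sum>y\<in>PiE {..<k} C. P y i i') / of_nat K" for i i'
  proof -
    have "(\<Prod>j<k. M j (x j) (a j) (i j) (i' j))
        = (\<Prod>j<k. \<Sum>y\<in>C j. N j y (a j) (i j) (i' j)) / (\<Prod>j<k. of_nat (card (C j)))"
      using avg by (simp add: prod_dividef)
    also have "(\<Prod>j<k. \<Sum>y\<in>C j. N j y (a j) (i j) (i' j)) = (\<Sum>y\<in>PiE {..<k} C. P y i i')"
      unfolding P_def using C by (subst prod_sum_PiE) auto
    finally show ?thesis unfolding K_def by (simp add: card_PiE)
  qed
  have "(\<Sum>i\<in>idx k d. \<Sum>i'\<in>idx k d. cnj (psi i) * (\<Prod>j<k. M j (x j) (a j) (i j) (i' j)) * psi i')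
      = (\<Sum>i\<in>idx k d. \<Sum>i'\<in>idx k d. \<Sum>y\<in>PiE {..<k} C. cnj (psi i) * P y i i' * psi i') / of_nat K"
    unfolding prod by (simp add: sum_distrib_left sum_distrib_right sum_divide_distrib)
  also have "\<dots> = (\<Sum>y\<in>PiE {..<k} C. \<Sum>i\<in>idx k d. \<Sum>i'\<in>idx k d. cnj (psi i) * P y i i' * psi i') / of_nat K"
    by (subst sum.swap, subst (2) sum.swap) (rule refl)
  finally have "ent_prob k d psi M x a = (\<Sum>y\<in>PiE {..<k} C. ent_prob k d psi N y a) / real K"
    unfolding ent_prob_def P_def by simp
  then show ?thesis using \<open>K \<noteq> 0\<close> unfolding K_def by simp
qed

lemma ent_win_at_fiber_avg:
  assumes finX': "\<forall>j<k. finite (X' j)" and x: "x \<in> PiE {..<k} X"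
  shows "(\<Sum>y\<in>{y \<in> PiE {..<k} X'. map_tuple k f y = x}. ent_win_at k A (\<lambda>y a. V (map_tuple k f y) a) d psi M y)
    = real (card {y \<in> PiE {..<k} X'. map_tuple k f y = x})
      * ent_win_at k A V d psi (\<lambda>j. fiber_avg (X' j) (f j) (M j)) x"
proof -
  define F where "F = {y \<in> PiE {..<k} X'. map_tuple k f y = x}"
  have F: "F = PiE {..<k} (\<lambda>j. {y \<in> X' j. f j y = x j})"
    unfolding F_def using map_tuple_fiber[OF x] .
  have prob: "(\<Sum>y\<in>F. ent_prob k d psi M y a)
      = real (card F) * ent_prob k d psi (\<lambda>j. fiber_avg (X' j) (f j) (M j)) x a" for a
  proof (cases "F = {}")
    case False
    then have "\<forall>j<k. {y \<in> X' j. f j y = x j} \<noteq> {}" unfolding F by (auto simp: PiE_eq_empty_iff)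
    then show ?thesis unfolding F using finX'
      by (intro ent_prob_average) (auto simp: fiber_avg_def)
  qed simp
  have "(\<Sum>y\<in>F. ent_win_at k A (\<lambda>y a. V (map_tuple k f y) a) d psi M y)
      = (\<Sum>y\<in>F. \<Sum>a\<in>PiE {..<k} A. if V x a then ent_prob k d psi M y a else 0)"
    unfolding ent_win_at_def F_def by (rule sum.cong[OF refl]) simp
  also have "\<dots> = (\<Sum>a\<in>PiE {..<k} A. if V x a then (\<Sum>y\<in>F. ent_prob k d psi M y a) else 0)"
    by (subst sum.swap) (rule sum.cong[OF refl], simp)
  also have "\<dots> = real (card F) * ent_win_at k A V d psi (\<lambda>j. fiber_avg (X' j) (f j) (M j)) x"
    unfolding ent_win_at_def prob sum_distrib_left by (rule sum.cong[OF refl]) simp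
  finally show ?thesis unfolding F_def .
qed

lemma ent_win_pullback:
  assumes "\<forall>j<k. finite (X j)" "\<forall>j<k. finite (X' j)" "\<forall>j<k. f j ` X' j \<subseteq> X j"
  shows "ent_win k X' A (\<lambda>y. 1 / real (card (PiE {..<k} X'))) (\<lambda>y a. V (map_tuple k f y) a)
      d psi (\<lambda>j y. M j (f j y))
    = ent_win k X A (\<lambda>x. \<Prod>j<k. push_unif (X' j) (f j) (x j)) V d psi M"
  unfolding ent_win_eq_sum_ent_win_at ent_win_at_pullback
  using assms by (intro sum_uniform_by_fibers) auto

lemma ent_win_fiber_avg:
  assumes "\<forall>j<k. finite (X j)" "\<forall>j<k. finite (X' j)" "\<forall>j<k. f j ` X' j \<subseteq> X j"
  shows "ent_win k X' A (\<lambda>y. 1 / real (card (PiE {..<k} X'))) (\<lambda>y a. V (map_tuple k f y) a) d psi M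
    = ent_win k X A (\<lambda>x. \<Prod>j<k. push_unif (X' j) (f j) (x j)) V d psi
        (\<lambda>j. fiber_avg (X' j) (f j) (M j))"
  unfolding ent_win_eq_sum_ent_win_at
  using assms ent_win_at_fiber_avg[OF assms(2)] by (intro sum_uniform_by_fibers) auto

lemma val_star_uniform_pullback:
  assumes X: "\<forall>j<k. finite (X j)" and X': "\<forall>j<k. finite (X' j) \<and> X' j \<noteq> {}"
    and maps: "\<forall>j<k. f j ` X' j \<subseteq> X j"
  shows "val_star k X' A (\<lambda>y. 1 / real (card (PiE {..<k} X'))) (\<lambda>y a. V (map_tuple k f y) a)
    = val_star k X A (\<lambda>x. \<Prod>j<k. push_unif (X' j) (f j) (x j)) V"
proof -
  let ?win' = "ent_win k X' A (\<lambda>y. 1 / real (card (PiE {..<k} X'))) (\<lambda>y a. V (map_tuple k f y) a)"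
  let ?win = "ent_win k X A (\<lambda>x. \<Prod>j<k. push_unif (X' j) (f j) (x j)) V"
  have "{?win' d psi M | d psi M. ent_strategy k X' A d psi M}
      = {?win d psi M | d psi M. ent_strategy k X A d psi M}"
  proof (intro set_eqI iffI)
    fix s assume "s \<in> {?win' d psi M | d psi M. ent_strategy k X' A d psi M}"
    then obtain d psi M where "ent_strategy k X' A d psi M" "s = ?win' d psi M" by blast
    moreover from this(1) have "ent_strategy k X A d psi (\<lambda>j. fiber_avg (X' j) (f j) (M j))"
      using X' by (rule ent_strategy_fiber_avg)
    ultimately have "s = ?win d psi (\<lambda>j. fiber_avg (X' j) (f j) (M j))
        \<and> ent_strategy k X A d psi (\<lambda>j. fiber_avg (X' j) (f j) (M j))"
      using ent_win_fiber_avg[of k X X' f A V d psi M] X X' maps by auto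
    then show "s \<in> {?win d psi M | d psi M. ent_strategy k X A d psi M}" by blast
  next
    fix s assume "s \<in> {?win d psi M | d psi M. ent_strategy k X A d psi M}"
    then obtain d psi M where "ent_strategy k X A d psi M" "s = ?win d psi M" by blast
    moreover from this(1) have "ent_strategy k X' A d psi (\<lambda>j y. M j (f j y))"
      using maps by (rule ent_strategy_pullback)
    ultimately have "s = ?win' d psi (\<lambda>j y. M j (f j y)) \<and> ent_strategy k X' A d psi (\<lambda>j y. M j (f j y))"
      using ent_win_pullback[of k X X' f A V d psi M] X X' maps by auto
    then show "s \<in> {?win' d psi M | d psi M. ent_strategy k X' A d psi M}" by blast
  qed
  then show ?thesis unfolding val_star_def by simp
qed

section \<open>The entangled value\<close>

lemma abs_cSUP_diff_le:
  fixes g h :: "'a \<Rightarrow> real"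
  assumes "S \<noteq> {}" "bdd_above (g ` S)" "bdd_above (h ` S)" "\<forall>s\<in>S. \<bar>g s - h s\<bar> \<le> c"
  shows "\<bar>(SUP s\<in>S. g s) - (SUP s\<in>S. h s)\<bar> \<le> c"
proof -
  have "(SUP s\<in>S. g s) \<le> (SUP s\<in>S. h s) + c"
  proof (rule cSUP_least[OF assms(1)])
    fix s assume "s \<in> S"
    then have "g s \<le> h s + c" "h s \<le> (SUP s\<in>S. h s)"
      using assms(4) cSUP_upper[OF _ assms(3)] by (auto simp: abs_le_iff)
    then show "g s \<le> (SUP s\<in>S. h s) + c" by linarith
  qed
  moreover have "(SUP s\<in>S. h s) \<le> (SUP s\<in>S. g s) + c"
  proof (rule cSUP_least[OF assms(1)])
    fix s assume "s \<in> S"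
    then have "h s \<le> g s + c" "g s \<le> (SUP s\<in>S. g s)"
      using assms(4) cSUP_upper[OF _ assms(2)] by (auto simp: abs_le_iff)
    then show "h s \<le> (SUP s\<in>S. g s) + c" by linarith
  qed
  ultimately show ?thesis by linarith
qed

lemma val_star_eq_SUP:
  "val_star k X A mu V
    = (SUP (d, psi, M)\<in>{(d, psi, M). ent_strategy k X A d psi M}. ent_win k X A mu V d psi M)"
  unfolding val_star_def by (rule arg_cong[where f = Sup]) (auto simp: image_def)

lemma abs_val_star_diff_le_tv_dist:
  fixes X :: "nat \<Rightarrow> 'x set" and A :: "nat \<Rightarrow> 'a set"
  assumes X: "\<forall>j<k. finite (X j)" and A: "\<forall>j<k. finite (A j) \<and> A j \<noteq> {}"
    and nu: "distr_on (PiE {..<k} X) nu" and mu: "distr_on (PiE {..<k} X) mu"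
  shows "\<bar>val_star k X A nu V - val_star k X A mu V\<bar> \<le> tv_dist (PiE {..<k} X) nu mu"
  unfolding val_star_eq_SUP
proof (intro abs_cSUP_diff_le ballI)
  let ?S = "{(d, psi, M). ent_strategy k X A d psi M}"
  have finA: "\<forall>j<k. finite (A j)" using A by blast
  show "?S \<noteq> {}" using ent_strategy_exists[OF A, of X] by auto
  show "bdd_above ((\<lambda>(d, psi, M). ent_win k X A nu V d psi M) ` ?S)"
    and "bdd_above ((\<lambda>(d, psi, M). ent_win k X A mu V d psi M) ` ?S)"
    using ent_win_le_1[OF _ finA nu] ent_win_le_1[OF _ finA mu] by (auto intro!: bdd_aboveI[of _ 1])
  fix s assume "s \<in> ?S"
  then obtain d psi M where s: "s = (d, psi, M)" and S: "ent_strategy k X A d psi M" by auto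
  have "\<bar>ent_win k X A nu V d psi M - ent_win k X A mu V d psi M\<bar> \<le> tv_dist (PiE {..<k} X) nu mu"
    unfolding ent_win_eq_sum_ent_win_at using ent_win_at_bounds[OF S _ finA] nu mu
    unfolding distr_on_def by (intro abs_sum_diff_le_tv_dist) auto
  then show "\<bar>(case s of (d, psi, M) \<Rightarrow> ent_win k X A nu V d psi M)
      - (case s of (d, psi, M) \<Rightarrow> ent_win k X A mu V d psi M)\<bar> \<le> tv_dist (PiE {..<k} X) nu mu"
    unfolding s by simp
qed

theorem claim5p1:
  fixes k :: nat
    and X :: "nat \<Rightarrow> 'x set" and A :: "nat \<Rightarrow> 'a set"
    and mu1 :: "nat \<Rightarrow> 'x \<Rightarrow> real"
    and V :: "(nat \<Rightarrow> 'x) \<Rightarrow> (nat \<Rightarrow> 'a) \<Rightarrow> bool"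
    and X' :: "nat \<Rightarrow> 'y set" and f :: "nat \<Rightarrow> 'y \<Rightarrow> 'x"
    and \<gamma> :: real
  assumes k_pos: "0 < k"
    and fin_X: "\<forall>j<k. finite (X j) \<and> X j \<noteq> {}"
    and fin_A: "\<forall>j<k. finite (A j) \<and> A j \<noteq> {}"
    and mu_distr: "\<forall>j<k. (\<forall>x\<in>X j. 0 \<le> mu1 j x) \<and> (\<Sum>x\<in>X j. mu1 j x) = 1"
    and gamma_pos: "0 < \<gamma>"
    and fin_X': "\<forall>j<k. finite (X' j) \<and> X' j \<noteq> {}"
    and f_maps: "\<forall>j<k. f j ` X' j \<subseteq> X j"
    and f_close: "\<forall>j<k. tv_dist (X j) (push_unif (X' j) (f j)) (mu1 j) \<le> \<gamma> / real k"
  shows "\<bar>val_star k X' A (\<lambda>y. 1 / real (card (PiE {..<k} X')))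
              (\<lambda>y a. V (\<lambda>j\<in>{..<k}. f j (y j)) a)
          - val_star k X A (\<lambda>x. \<Prod>j<k. mu1 j (x j)) V\<bar> \<le> \<gamma>"
proof -
  define nu where "nu = (\<lambda>x. \<Prod>j<k. push_unif (X' j) (f j) (x j))"
  have X: "\<forall>j<k. finite (X j)" using fin_X by blast
  have push: "\<forall>j<k. distr_on (X j) (push_unif (X' j) (f j))"
  proof (intro allI impI)
    fix j assume "j < k"
    then show "distr_on (X j) (push_unif (X' j) (f j))"
      using fin_X fin_X' f_maps by (intro distr_on_push_unif) auto
  qed
  have mu1: "\<forall>j<k. distr_on (X j) (mu1 j)" using mu_distr unfolding distr_on_def by blast
  have "val_star k X' A (\<lambda>y. 1 / real (card (PiE {..<k} X'))) (\<lambda>y a. V (\<lambda>j\<in>{..<k}. f j (y j)) a)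
      = val_star k X A nu V"
    using val_star_uniform_pullback[OF X fin_X' f_maps] unfolding map_tuple_def nu_def .
  moreover have "\<bar>val_star k X A nu V - val_star k X A (\<lambda>x. \<Prod>j<k. mu1 j (x j)) V\<bar>
      \<le> tv_dist (PiE {..<k} X) nu (\<lambda>x. \<Prod>j<k. mu1 j (x j))"
    using X fin_A push mu1 unfolding nu_def by (intro abs_val_star_diff_le_tv_dist distr_on_prod) auto
  moreover have "tv_dist (PiE {..<k} X) nu (\<lambda>x. \<Prod>j<k. mu1 j (x j))
      \<le> (\<Sum>j<k. tv_dist (X j) (push_unif (X' j) (f j)) (mu1 j))"
    using X push mu1 unfolding nu_def by (intro tv_dist_prod_le_sum) auto
  moreover have "(\<Sum>j<k. tv_dist (X j) (push_unif (X' j) (f j)) (mu1 j)) \<le> \<gamma>"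
    using sum_mono[of "{..<k}" _ "\<lambda>_. \<gamma> / real k"] f_close k_pos by simp
  ultimately show ?thesis by linarith
qed

end
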